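(* Let $K$ be a field of characteristic $0$, $e\ge2$, $A,B\in M_e(K)$ and $d\in(\mathbb{Z}/e\mathbb{Z})^\times$. Then $\mathrm{Char}_X(B\overset{d}{\ast}A)=\mathrm{Char}_X(A\overset{d^{-1}}{\ast}B)$, where $\mathrm{Char}_X$ denotes the characteristic polynomial.
   Context: For $A=[a_{i,j}],B=[b_{i,j}]\in M_e(K)$ (indices modulo $e$) and $d\in(\mathbb{Z}/e\mathbb{Z})\setminus\{0\}$, the $d$-composition is $A\overset{d}{\ast}B=\big[\sum_{s=0}^{e-1}\sum_{t=0}^{e-1}a_{s,t}b_{ds+i,dt+j}\big]_{0\le i,j\le e-1}$. *)

theory Defs
  imports "Jordan_Normal_Form.Char_Poly" "HOL-Number_Theory.Cong"
begin

text \<open>d-composition of two e x e matrices, indices taken modulo e;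
  d is a natural-number representative of a residue class mod e.\<close>
definition dcomp :: "nat \<Rightarrow> nat \<Rightarrow> 'a::comm_ring_1 mat \<Rightarrow> 'a mat \<Rightarrow> 'a mat" where
  "dcomp e d A B = mat e e (\<lambda>(i,j).
     \<Sum>s<e. \<Sum>t<e. A $$ (s,t) * B $$ ((d*s+i) mod e, (d*t+j) mod e))"

end

theory Submission
  imports Defs
begin

(* Substituting u = d s + i and v = d t + j, which permute Z/eZ because d is a unit, in the
   double sum defining B *_d A shows that its (i, j) entry is the (-d' i, -d' j) entry of
   A *_d' B. Hence the two compositions differ by the same permutation of rows and of columns,
   i.e. they are conjugate by a permutation matrix and have the same characteristic polynomial. *)

lemma cong_inverse_imp_coprime:
  fixes d d' e :: nat
  assumes "[d * d' = 1] (mod e)"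
  shows "coprime d e"
  unfolding coprime_iff_invertible_nat One_nat_def [symmetric]
  using assms by blast

lemma mod_affine_bij_betw:
  fixes d e i :: nat
  assumes "coprime d e"
  shows "bij_betw (\<lambda>s. (d * s + i) mod e) {..<e} {..<e}"
proof -
  have "inj_on (\<lambda>s. (d * s + i) mod e) {..<e}"
  proof (rule inj_onI)
    fix s t
    assume s: "s \<in> {..<e}" and t: "t \<in> {..<e}"
      and "(d * s + i) mod e = (d * t + i) mod e"
    then have "[d * s = d * t] (mod e)"
      by (simp add: cong_def [symmetric] cong_add_rcancel_nat)
    then have "[s = t] (mod e)"
      using assms by (simp add: cong_mult_lcancel_nat)
    then show "s = t"
      using s t by (simp add: cong_less_modulus_unique_nat)
  qed
  moreover have "(\<lambda>s. (d * s + i) mod e) ` {..<e} \<subseteq> {..<e}"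
    by auto
  ultimately show ?thesis
    by (simp add: bij_betw_def endo_inj_surj)
qed

lemma sum_mod_affine_reindex:
  fixes d e i :: nat
  assumes "coprime d e"
  shows "(\<Sum>s<e. f ((d * s + i) mod e)) = (\<Sum>u<e. f u)"
  using sum.reindex_bij_betw [OF mod_affine_bij_betw [OF assms]] .

lemma sum2_mod_affine_reindex:
  fixes d e i j :: nat
  assumes "coprime d e"
  shows "(\<Sum>s<e. \<Sum>t<e. f ((d * s + i) mod e) ((d * t + j) mod e)) = (\<Sum>u<e. \<Sum>v<e. f u v)"
  using sum_mod_affine_reindex [OF assms, of "\<lambda>u. \<Sum>v<e. f u v"]
  by (simp add: sum_mod_affine_reindex [OF assms])

lemma mod_affine_inverse:
  fixes d d' e i k s :: nat
  assumes "[d * d' = 1] (mod e)" and "[k + d' * i = 0] (mod e)" and "s < e"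
  shows "(d' * ((d * s + i) mod e) + k) mod e = s"
proof -
  have "[d' * ((d * s + i) mod e) + k = d' * (d * s + i) + k] (mod e)"
    by (intro cong_add cong_mult cong_refl) (simp add: cong_def)
  also have "d' * (d * s + i) + k = (d * d') * s + (k + d' * i)"
    by (simp add: algebra_simps)
  also have "[(d * d') * s + (k + d' * i) = 1 * s + 0] (mod e)"
    using assms(1,2) by (intro cong_add cong_mult cong_refl)
  finally show ?thesis
    using assms(3) by (simp add: cong_def)
qed

definition perm_mat :: "nat \<Rightarrow> (nat \<Rightarrow> nat) \<Rightarrow> 'a::comm_ring_1 mat" where
  "perm_mat n \<sigma> = mat n n (\<lambda>(i, j). of_bool (\<sigma> i = j))"

lemma perm_mat_carrier [simp]: "perm_mat n \<sigma> \<in> carrier_mat n n"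
  by (simp add: perm_mat_def)

lemma perm_mat_mult:
  assumes "M \<in> carrier_mat n m" and "\<And>i. i < n \<Longrightarrow> \<sigma> i < n"
  shows "perm_mat n \<sigma> * M = mat n m (\<lambda>(i, k). M $$ (\<sigma> i, k))"
  using assms by (intro eq_matI) (auto simp: perm_mat_def scalar_prod_def)

lemma mult_perm_mat_inv_into:
  assumes "M \<in> carrier_mat m n" and \<sigma>: "bij_betw \<sigma> {..<n} {..<n}"
  shows "M * perm_mat n (inv_into {..<n} \<sigma>) = mat m n (\<lambda>(i, l). M $$ (i, \<sigma> l))"
proof (rule eq_matI)
  fix i l
  assume "i < dim_row (mat m n (\<lambda>(i, l). M $$ (i, \<sigma> l)))"
    and "l < dim_col (mat m n (\<lambda>(i, l). M $$ (i, \<sigma> l)))"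
  then have i: "i < m" and l: "l < n"
    by auto
  have "{0..<n} \<inter> {k. inv_into {..<n} \<sigma> k = l} = {\<sigma> l}"
    using \<sigma> l by (auto simp: bij_betw_inv_into_left bij_betw_inv_into_right dest: bij_betwE)
  then show "(M * perm_mat n (inv_into {..<n} \<sigma>)) $$ (i, l)
    = mat m n (\<lambda>(i, l). M $$ (i, \<sigma> l)) $$ (i, l)"
    using assms(1) i l by (simp add: perm_mat_def scalar_prod_def)
qed (use assms in \<open>auto simp: perm_mat_def\<close>)

lemma similar_mat_perm:
  fixes C D :: "'a::comm_ring_1 mat"
  assumes C: "C \<in> carrier_mat n n" and D: "D \<in> carrier_mat n n"
    and \<sigma>: "bij_betw \<sigma> {..<n} {..<n}"
    and CD: "\<And>i j. i < n \<Longrightarrow> j < n \<Longrightarrow> C $$ (i, j) = D $$ (\<sigma> i, \<sigma> j)"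
  shows "similar_mat C D"
proof -
  define \<tau> where "\<tau> = inv_into {..<n} \<sigma>"
  have \<tau>: "bij_betw \<tau> {..<n} {..<n}"
    using \<sigma> by (simp add: \<tau>_def bij_betw_inv_into)
  have \<sigma>_less: "\<sigma> i < n" and \<tau>_less: "\<tau> i < n" if "i < n" for i
    using \<sigma> \<tau> that by (auto dest: bij_betwE)
  define P :: "'a mat" where "P = perm_mat n \<sigma>"
  define Q :: "'a mat" where "Q = perm_mat n \<tau>"
  have "P * Q = mat n n (\<lambda>(i, k). Q $$ (\<sigma> i, k))"
    unfolding P_def by (rule perm_mat_mult [OF _ \<sigma>_less]) (simp add: Q_def)
  also have "\<dots> = 1\<^sub>m n"
    using \<sigma> \<sigma>_less by (intro eq_matI) (auto simp: Q_def perm_mat_def \<tau>_def bij_betw_inv_into_left)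
  finally have PQ: "P * Q = 1\<^sub>m n" .
  have "Q * P = mat n n (\<lambda>(i, k). P $$ (\<tau> i, k))"
    unfolding Q_def by (rule perm_mat_mult [OF _ \<tau>_less]) (simp add: P_def)
  also have "\<dots> = 1\<^sub>m n"
    using \<sigma> \<tau>_less by (intro eq_matI) (auto simp: P_def perm_mat_def \<tau>_def bij_betw_inv_into_right)
  finally have QP: "Q * P = 1\<^sub>m n" .
  have "P * D * Q = mat n n (\<lambda>(i, k). D $$ (\<sigma> i, k)) * perm_mat n \<tau>"
    by (simp add: P_def Q_def perm_mat_mult [OF D \<sigma>_less])
  also have "\<dots> = mat n n (\<lambda>(i, l). mat n n (\<lambda>(i, k). D $$ (\<sigma> i, k)) $$ (i, \<sigma> l))"
    unfolding \<tau>_def by (rule mult_perm_mat_inv_into [OF _ \<sigma>]) simp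
  also have "\<dots> = C"
    using C \<sigma>_less CD by (intro eq_matI) auto
  finally have "C = P * D * Q" ..
  with C D PQ QP show ?thesis
    by (intro similar_matI [of C D P Q n]) (auto simp: P_def Q_def)
qed

lemma dcomp_swap_entry:
  fixes A B :: "'a::comm_ring_1 mat" and e d d' i j :: nat
  assumes inv: "[d * d' = 1] (mod e)" and "i < e" and "j < e"
  shows "dcomp e d B A $$ (i, j)
    = dcomp e d' A B $$ ((e - 1) * d' * i mod e, (e - 1) * d' * j mod e)"
proof -
  \<comment> \<open>\<open>(e - 1) * d'\<close> represents \<open>-d'\<close> modulo \<open>e\<close>\<close>
  define \<sigma> where "\<sigma> k = (e - 1) * d' * k mod e" for k
  have "[\<sigma> k + d' * k = 0] (mod e)" for k
  proof -
    have "(e - 1) * d' * k + d' * k = e * (d' * k)"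
      using \<open>i < e\<close> by (cases e) (simp_all add: algebra_simps)
    then show ?thesis
      by (simp add: \<sigma>_def cong_def mod_add_left_eq)
  qed
  then have undo: "(d' * ((d * s + k) mod e) + \<sigma> k) mod e = s" if "s < e" for s k
    using mod_affine_inverse [OF inv _ that] by blast
  have "dcomp e d' A B $$ (\<sigma> i, \<sigma> j)
      = (\<Sum>u<e. \<Sum>v<e. A $$ (u, v) * B $$ ((d' * u + \<sigma> i) mod e, (d' * v + \<sigma> j) mod e))"
    using \<open>i < e\<close> by (simp add: dcomp_def \<sigma>_def)
  also have "\<dots> = (\<Sum>s<e. \<Sum>t<e. A $$ ((d * s + i) mod e, (d * t + j) mod e)
      * B $$ ((d' * ((d * s + i) mod e) + \<sigma> i) mod e, (d' * ((d * t + j) mod e) + \<sigma> j) mod e))"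
    by (rule sum2_mod_affine_reindex [OF cong_inverse_imp_coprime [OF inv], symmetric])
  also have "\<dots> = dcomp e d B A $$ (i, j)"
    using assms by (simp add: dcomp_def undo) (simp add: mult.commute)
  finally show ?thesis
    by (simp add: \<sigma>_def)
qed

lemma dcomp_swap_similar:
  fixes A B :: "'a::comm_ring_1 mat" and e d d' :: nat
  assumes "e > 0" and inv: "[d * d' = 1] (mod e)"
  shows "similar_mat (dcomp e d B A) (dcomp e d' A B)"
proof (rule similar_mat_perm [where \<sigma> = "\<lambda>k. (e - 1) * d' * k mod e"])
  have "coprime (e - 1) e"
    using \<open>e > 0\<close> coprime_Suc_left_nat [of "e - 1"] by (simp add: coprime_commute)
  moreover have "coprime d' e"
    using inv by (intro cong_inverse_imp_coprime [of d' d]) (simp add: mult.commute)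
  ultimately have "coprime ((e - 1) * d') e"
    by simp
  from mod_affine_bij_betw [OF this, of 0]
  show "bij_betw (\<lambda>k. (e - 1) * d' * k mod e) {..<e} {..<e}"
    by simp
next
  fix i j
  assume "i < e" and "j < e"
  then show "dcomp e d B A $$ (i, j)
    = dcomp e d' A B $$ ((e - 1) * d' * i mod e, (e - 1) * d' * j mod e)"
    by (rule dcomp_swap_entry [OF inv])
qed (simp_all add: dcomp_def)

theorem corollary3p2:
  fixes A B :: "'a::field_char_0 mat" and e d d' :: nat
  assumes "e \<ge> 2"
    and "A \<in> carrier_mat e e" and "B \<in> carrier_mat e e"
    and "[d * d' = 1] (mod e)"
  shows "char_poly (dcomp e d B A) = char_poly (dcomp e d' A B)"
  \<comment> \<open>\<open>dcomp\<close> always yields \<open>e \<times> e\<close> matrices\<close>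
  using assms(1,4) by (intro char_poly_similar dcomp_swap_similar) simp_all

end
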